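(* Let $G=([n],E)$ be a DAG all of whose edges $(u,v)$ satisfy $u<v$ that is a $\delta$-local expander, let $S\subseteq[n]$, and let $x<y$ in $[n]$ both be $\gamma$-good under $S$. If $\delta<\min\{\gamma/2,1/4\}$, then there is a directed path from $x$ to $y$ in $G-S$.
   Context: For $x\in[n]$ and integer $r>0$ let $I_r(x)=\{x-r+1,\ldots,x\}\cap[n]$ and $I^*_r(x)=\{x+1,\ldots,x+r\}\cap[n]$. A DAG $G=([n],E)$ is a $\delta$-local expander if for every $x\in[n]$, every integer $r\ge1$ with $r\le x$ and $r\le n-x$, and every $A\subseteq I_r(x)$, $B\subseteq I^*_r(x)$ with $|A|\ge\delta r$ and $|B|\ge\delta r$, there is an edge $(a,b)\in E$ with $a\in A$, $b\in B$. For $S\subseteq[n]$ and $\gamma>0$, a node $x\in[n]$ is $\gamma$-good under $S$ if for every integer $r>0$, $|I_r(x)\setminus S|\ge\gamma|I_r(x)|$ and $|I^*_r(x)\setminus S|\ge\gamma|I^*_r(x)|$. $G-S$ is $G$ with the nodes of $S$ and incident edges removed. *)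

theory Defs
  imports Complex_Main
begin

definition nodes :: "nat \<Rightarrow> nat set" where
  "nodes n = {1..n}"

text \<open>I_r(x) = {x-r+1,...,x} \<inter> [n] (written without natural subtraction).\<close>
definition Iback :: "nat \<Rightarrow> nat \<Rightarrow> nat \<Rightarrow> nat set" where
  "Iback n r x = {k \<in> nodes n. x < k + r \<and> k \<le> x}"

definition Ifwd :: "nat \<Rightarrow> nat \<Rightarrow> nat \<Rightarrow> nat set" where
  "Ifwd n r x = {k \<in> nodes n. x < k \<and> k \<le> x + r}"

definition local_expander :: "nat \<Rightarrow> (nat \<times> nat) set \<Rightarrow> real \<Rightarrow> bool" where
  "local_expander n E \<delta> \<longleftrightarrow>
     (\<forall>x \<in> nodes n. \<forall>r::nat. 1 \<le> r \<and> r \<le> x \<and> r \<le> n - x \<longrightarrow>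
        (\<forall>A B. A \<subseteq> Iback n r x \<and> B \<subseteq> Ifwd n r x \<and>
               real (card A) \<ge> \<delta> * real r \<and> real (card B) \<ge> \<delta> * real r \<longrightarrow>
               (\<exists>a \<in> A. \<exists>b \<in> B. (a, b) \<in> E)))"

definition good :: "nat \<Rightarrow> nat set \<Rightarrow> real \<Rightarrow> nat \<Rightarrow> bool" where
  "good n S \<gamma> x \<longleftrightarrow>
     (\<forall>r::nat. r > 0 \<longrightarrow>
        real (card (Iback n r x - S)) \<ge> \<gamma> * real (card (Iback n r x)) \<and>
        real (card (Ifwd n r x - S)) \<ge> \<gamma> * real (card (Ifwd n r x)))"

definition path_avoiding :: "(nat \<times> nat) set \<Rightarrow> nat set \<Rightarrow> nat \<Rightarrow> nat \<Rightarrow> bool" where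
  "path_avoiding E S x y \<longleftrightarrow>
     (\<exists>p. p \<noteq> [] \<and> hd p = x \<and> last p = y \<and> set p \<inter> S = {} \<and>
          (\<forall>i. Suc i < length p \<longrightarrow> (p ! i, p ! Suc i) \<in> E))"

end

(*
  Let R be the set of nodes of G - S reachable from x and D the remaining nodes of G - S.
  No edge leads from R to D, so by the expander property no window (c-r, c] \<union> (c, c+r] has
  \<delta>r nodes of R in its left half and \<delta>r nodes of D in its right half. Goodness puts at least
  2\<delta>\<cdot>length nodes of G - S into every interval next to x or y, so a halving induction shows
  that D is sparse in every interval (x, z] and, if y \<notin> R, that R is sparse in every
  interval (y-t, y]. A window centred halfway between x and y then has an R-dense left half
  and a D-dense right half, which is impossible.
*)
theory Submission
  imports Defs
begin

lemma add_le_twice_of_nat: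
  fixes p q :: nat and a :: real
  assumes "real p \<le> a" and "real q < a + 1/2"
  shows "real (p + q) \<le> 2 * a"
proof (cases "q \<le> p")
  case True
  then show ?thesis using assms(1) by simp
next
  case False
  then have "real q \<ge> real p + 1" by simp
  then show ?thesis using assms by simp
qed

lemma card_Int_greaterThanAtMost_split:
  fixes X :: "nat set"
  assumes "a \<le> b" "b \<le> c"
  shows "card (X \<inter> {a<..c}) = card (X \<inter> {a<..b}) + card (X \<inter> {b<..c})"
proof -
  have "X \<inter> {a<..c} = (X \<inter> {a<..b}) \<union> (X \<inter> {b<..c})" using assms by auto
  moreover have "(X \<inter> {a<..b}) \<inter> (X \<inter> {b<..c}) = {}" by auto
  ultimately show ?thesis by (simp add: card_Un_disjoint finite_Int)
qed

(* R and D stand for the nodes of G - S that are, respectively are not, reachable from x. *)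
locale separated_windows =
  fixes n :: nat and R D :: "nat set" and \<delta> :: real
  assumes sparse_window: "\<lbrakk>1 \<le> r; r \<le> c; c + r \<le> n; \<delta> * r \<le> card (R \<inter> {c-r<..c})\<rbrakk>
      \<Longrightarrow> card (D \<inter> {c<..c+r}) < \<delta> * r"
    and delta_pos: "0 < \<delta>" and delta_less_half: "\<delta> < 1/2"
begin

lemma sparse_window_dual:
  "\<lbrakk>1 \<le> r; r \<le> c; c + r \<le> n; \<delta> * r \<le> card (D \<inter> {c<..c+r})\<rbrakk>
    \<Longrightarrow> card (R \<inter> {c-r<..c}) < \<delta> * r"
  using sparse_window by fastforce

lemma R_dense_window:
  assumes "x \<in> R" "a \<le> x" "x \<le> a + 1" "x \<le> c"
    and D_sparse: "card (D \<inter> {x<..c}) \<le> \<delta> * real (c - x)"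
    and dense: "2 * \<delta> * real (c - x) \<le> card (R \<inter> {x<..c}) + card (D \<inter> {x<..c})"
  shows "\<delta> * real (c - a) \<le> card (R \<inter> {a<..c})"
proof (cases "a = x")
  case True
  then show ?thesis using D_sparse dense by simp
next
  case False
  then have a: "a = x - 1" "1 \<le> x" using assms(2,3) by auto
  then have "R \<inter> {a<..c} = insert x (R \<inter> {x<..c})" using assms(1,4) by auto
  then have "card (R \<inter> {a<..c}) = card (R \<inter> {x<..c}) + 1" by simp
  moreover have "real (c - a) = real (c - x) + 1" using a assms(4) by simp
  moreover have "\<delta> * real (c - x) \<le> card (R \<inter> {x<..c})" using D_sparse dense by simp
  ultimately show ?thesis using delta_less_half by (simp add: algebra_simps)
qed

lemma D_sparse_after:
  assumes "x \<in> R" "1 \<le> x"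
    and dense: "\<And>z. x \<le> z \<Longrightarrow> z \<le> n \<Longrightarrow>
      2 * \<delta> * real (z - x) \<le> card (R \<inter> {x<..z}) + card (D \<inter> {x<..z})"
  shows "x \<le> z \<Longrightarrow> z \<le> n \<Longrightarrow> card (D \<inter> {x<..z}) \<le> \<delta> * real (z - x)"
proof (induction "z - x" arbitrary: z rule: less_induct)
  case less
  show ?case
  proof (cases "z = x")
    case False
    define m where "m = (z - x + 1) div 2"
    define c where "c = z - m"
    have m: "1 \<le> m" "m \<le> c" "x \<le> c" "c + m = z" "c - m \<le> x" "x \<le> c - m + 1"
      using False less.prems \<open>1 \<le> x\<close> unfolding c_def m_def by auto
    have IH: "card (D \<inter> {x<..c}) \<le> \<delta> * real (c - x)"
      using less.hyps[of c] m less.prems by simp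
    have "2 * \<delta> * real (c - x) \<le> card (R \<inter> {x<..c}) + card (D \<inter> {x<..c})"
      using dense[OF m(3)] m(4) less.prems(2) by simp
    from R_dense_window[OF \<open>x \<in> R\<close> m(5,6,3) IH this]
    have "\<delta> * m \<le> card (R \<inter> {c - m<..c})" using m(2) by simp
    then have "card (D \<inter> {c<..z}) < \<delta> * m"
      using sparse_window[OF m(1,2)] m less.prems by simp
    moreover have "card (D \<inter> {x<..z}) = card (D \<inter> {x<..c}) + card (D \<inter> {c<..z})"
      using card_Int_greaterThanAtMost_split[of x c z D] m by simp
    moreover have "real (z - x) = real (c - x) + real m" using m by simp
    ultimately show ?thesis using IH by (simp add: distrib_left)
  qed simp
qed

lemma R_sparse_before:
  assumes "y \<notin> R" "y \<le> n"
    and dense: "\<And>t. t \<le> y \<Longrightarrow>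
      2 * \<delta> * t \<le> card (R \<inter> {y-t<..y}) + card (D \<inter> {y-t<..y})"
  shows "1 \<le> t \<Longrightarrow> t < y \<Longrightarrow> card (R \<inter> {y-t<..y}) \<le> \<delta> * (real t - 1)"
proof (induction t rule: less_induct)
  case (less t)
  show ?case
  proof (cases "t = 1")
    case True
    then have "{y-t<..y} = {y}" using less.prems by auto
    then have "R \<inter> {y-t<..y} = {}" using \<open>y \<notin> R\<close> by auto
    then show ?thesis using True by simp
  next
    case False
    define u where "u = (t + 1) div 2"
    have u: "1 \<le> u" "u < t" "u \<le> y - u" "y - t \<ge> (y - u) - u" "real t - 1 \<ge> 2 * (real u - 1)"
      using False less.prems unfolding u_def by auto
    have IH: "card (R \<inter> {y-u<..y}) \<le> \<delta> * (real u - 1)"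
      using less.IH[OF u(2) u(1)] less.prems u(2) by simp
    have "\<delta> * u \<le> card (D \<inter> {y-u<..y})"
      using IH dense[of u] u delta_pos less.prems by (simp add: algebra_simps)
    then have "card (R \<inter> {(y-u)-u<..y-u}) < \<delta> * u"
      using sparse_window_dual[OF u(1,3)] u less.prems \<open>y \<le> n\<close> by simp
    moreover have "card (R \<inter> {y-t<..y-u}) \<le> card (R \<inter> {(y-u)-u<..y-u})"
      using u(4) by (intro card_mono) auto
    ultimately have "card (R \<inter> {y-t<..y-u}) < \<delta> * (real u - 1) + 1/2"
      using delta_less_half by (simp add: algebra_simps)
    \<comment> \<open>integrality of the counts absorbs the surplus \<delta> < 1/2 of the odd case t = 2u - 1\<close>
    then have "card (R \<inter> {y-u<..y}) + card (R \<inter> {y-t<..y-u}) \<le> 2 * (\<delta> * (real u - 1))"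
      using add_le_twice_of_nat IH by metis
    moreover have "card (R \<inter> {y-t<..y}) = card (R \<inter> {y-t<..y-u}) + card (R \<inter> {y-u<..y})"
      using card_Int_greaterThanAtMost_split[of "y-t" "y-u" y R] u(2) by simp
    moreover have "2 * (\<delta> * (real u - 1)) \<le> \<delta> * (real t - 1)"
      using mult_left_mono[OF u(5), of \<delta>] delta_pos by simp
    ultimately show ?thesis by simp
  qed
qed

lemma dense_point_in_R:
  assumes "x \<in> R" "1 \<le> x" "x < y" "y \<le> n"
    and dense_after: "\<And>z. x \<le> z \<Longrightarrow> z \<le> n \<Longrightarrow>
      2 * \<delta> * real (z - x) \<le> card (R \<inter> {x<..z}) + card (D \<inter> {x<..z})"
    and dense_before: "\<And>t. t \<le> y \<Longrightarrow>
      2 * \<delta> * t \<le> card (R \<inter> {y-t<..y}) + card (D \<inter> {y-t<..y})"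
  shows "y \<in> R"
proof (rule ccontr)
  assume "y \<notin> R"
  define s where "s = (y - x + 1) div 2"
  define c where "c = y - s"
  have s: "1 \<le> s" "s < y" "s \<le> c" "c + s = y" "x \<le> c" "c - s \<le> x" "x \<le> c - s + 1"
    using assms(2,3) unfolding c_def s_def by auto
  have "card (R \<inter> {c<..y}) \<le> \<delta> * (real s - 1)"
    using R_sparse_before[OF \<open>y \<notin> R\<close> \<open>y \<le> n\<close> dense_before s(1,2)] s(4) by fastforce
  moreover have "y - s = c" unfolding c_def ..
  ultimately have D_dense: "\<delta> * s \<le> card (D \<inter> {c<..y})"
    using dense_before[of s] s(2) delta_pos by (simp add: algebra_simps)
  have "c \<le> n" using s(4) assms(4) by simp
  have "card (D \<inter> {x<..c}) \<le> \<delta> * real (c - x)"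
    using D_sparse_after[OF assms(1,2) dense_after s(5) \<open>c \<le> n\<close>] .
  from R_dense_window[OF \<open>x \<in> R\<close> s(6,7,5) this dense_after[OF s(5) \<open>c \<le> n\<close>]]
  have "\<delta> * s \<le> card (R \<inter> {c-s<..c})" using s(3) by simp
  then show False
    using sparse_window[OF s(1,3)] D_dense s(4) assms(4) by fastforce
qed

end

lemma local_expander_window_edge:
  assumes "local_expander n E \<delta>" "1 \<le> r" "r \<le> c" "c + r \<le> n"
    and "\<delta> * r \<le> card (A \<inter> {c-r<..c})" "\<delta> * r \<le> card (B \<inter> {c<..c+r})"
  shows "\<exists>a \<in> A. \<exists>b \<in> B. (a, b) \<in> E"
proof -
  have "c \<in> nodes n" "r \<le> n - c" using assms(2-4) by (auto simp: nodes_def)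
  moreover have "A \<inter> {c-r<..c} \<subseteq> Iback n r c" "B \<inter> {c<..c+r} \<subseteq> Ifwd n r c"
    using assms(3,4) by (auto simp: Iback_def Ifwd_def nodes_def)
  ultimately have "\<exists>a \<in> A \<inter> {c-r<..c}. \<exists>b \<in> B \<inter> {c<..c+r}. (a, b) \<in> E"
    using assms unfolding local_expander_def by blast
  then show ?thesis by blast
qed

lemma local_expander_pos:
  assumes "local_expander n E \<delta>" "2 \<le> n"
  shows "0 < \<delta>"
proof (rule ccontr)
  assume "\<not> 0 < \<delta>"
  then have "\<exists>a \<in> {}. \<exists>b \<in> {}. (a, b) \<in> E"
    using local_expander_window_edge[OF assms(1), of 1 1 "{}" "{}"] assms(2) by simp
  then show False by simp
qed

lemma path_avoiding_refl: "x \<notin> S \<Longrightarrow> path_avoiding E S x x"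
  unfolding path_avoiding_def by (rule exI[of _ "[x]"]) simp

lemma path_avoiding_snoc:
  assumes "path_avoiding E S x a" "(a, b) \<in> E" "b \<notin> S"
  shows "path_avoiding E S x b"
proof -
  obtain p where p: "p \<noteq> []" "hd p = x" "last p = a" "set p \<inter> S = {}"
    and steps: "\<forall>i. Suc i < length p \<longrightarrow> (p ! i, p ! Suc i) \<in> E"
    using assms(1) unfolding path_avoiding_def by blast
  have "((p @ [b]) ! i, (p @ [b]) ! Suc i) \<in> E" if "Suc i < length (p @ [b])" for i
  proof (cases "Suc i < length p")
    case False
    then have "i = length p - 1" using that by simp
    then show ?thesis using p(1,3) assms(2) by (simp add: nth_append last_conv_nth)
  qed (use steps in \<open>simp add: nth_append\<close>)
  then show ?thesis
    unfolding path_avoiding_def using p assms(3) by (intro exI[of _ "p @ [b]"]) auto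
qed

lemma separated_windows_reachable:
  fixes n x :: nat and E :: "(nat \<times> nat) set" and S :: "nat set" and \<delta> :: real
  defines "R \<equiv> {v \<in> nodes n - S. path_avoiding E S x v}"
  assumes "E \<subseteq> nodes n \<times> nodes n" "local_expander n E \<delta>" "2 \<le> n" "\<delta> < 1/2"
  shows "separated_windows n R (nodes n - S - R) \<delta>"
proof
  fix r c
  assume window: "1 \<le> r" "r \<le> c" "c + r \<le> n" "\<delta> * r \<le> card (R \<inter> {c-r<..c})"
  show "card ((nodes n - S - R) \<inter> {c<..c+r}) < \<delta> * r"
  proof (rule ccontr)
    assume "\<not> ?thesis"
    then obtain a b where "a \<in> R" "b \<in> nodes n - S - R" "(a, b) \<in> E"
      using local_expander_window_edge[OF assms(3) window, of "nodes n - S - R"] by force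
    then show False using path_avoiding_snoc unfolding R_def by blast
  qed
qed (use assms local_expander_pos in auto)

lemma card_greaterThanAtMost_diff_split:
  assumes "R \<subseteq> nodes n - S" "b \<le> n"
  shows "card ({a<..b} - S) = card (R \<inter> {a<..b}) + card ((nodes n - S - R) \<inter> {a<..b})"
proof -
  have "{a<..b} - S = (R \<inter> {a<..b}) \<union> ((nodes n - S - R) \<inter> {a<..b})"
    using assms by (auto simp: nodes_def)
  moreover have "(R \<inter> {a<..b}) \<inter> ((nodes n - S - R) \<inter> {a<..b}) = {}" by blast
  ultimately show ?thesis by (simp add: card_Un_disjoint)
qed

lemma good_notin:
  assumes "good n S \<gamma> x" "0 < \<gamma>" "x \<in> nodes n"
  shows "x \<notin> S"
proof
  assume "x \<in> S"
  have "Iback n 1 x = {x}" using assms(3) by (auto simp: Iback_def)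
  moreover have "\<gamma> * card (Iback n 1 x) \<le> card (Iback n 1 x - S)"
    using assms(1) unfolding good_def by simp
  ultimately show False using \<open>x \<in> S\<close> assms(2) by simp
qed

lemma good_card_after:
  assumes "good n S \<gamma> x" "x \<le> z" "z \<le> n"
  shows "\<gamma> * real (z - x) \<le> card ({x<..z} - S)"
proof (cases "z = x")
  case False
  have "Ifwd n (z - x) x = {x<..z}" using assms(2,3) by (auto simp: Ifwd_def nodes_def)
  moreover have "\<gamma> * card (Ifwd n (z - x) x) \<le> card (Ifwd n (z - x) x - S)"
    using assms(1,2) False unfolding good_def by simp
  ultimately show ?thesis by simp
qed simp

lemma good_card_before:
  assumes "good n S \<gamma> y" "t \<le> y" "y \<le> n"
  shows "\<gamma> * t \<le> card ({y-t<..y} - S)"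
proof (cases "t = 0")
  case False
  have "Iback n t y = {y-t<..y}" using assms(2,3) by (auto simp: Iback_def nodes_def)
  moreover have "\<gamma> * card (Iback n t y) \<le> card (Iback n t y - S)"
    using assms(1) False unfolding good_def by simp
  ultimately show ?thesis using assms(2) by simp
qed simp

theorem mainTheorem11:
  fixes n :: nat and E :: "(nat \<times> nat) set" and S :: "nat set"
    and x y :: nat and \<delta> \<gamma> :: real
  assumes edges: "E \<subseteq> nodes n \<times> nodes n"
    and forward: "\<forall>(u, v) \<in> E. u < v"
    and expander: "local_expander n E \<delta>"
    and S_sub: "S \<subseteq> nodes n"
    and x_in: "x \<in> nodes n" and y_in: "y \<in> nodes n" and xy: "x < y"
    and x_good: "good n S \<gamma> x" and y_good: "good n S \<gamma> y"
    and \<gamma>_pos: "\<gamma> > 0"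
    and \<delta>_bound: "\<delta> < min (\<gamma> / 2) (1 / 4)"
  shows "path_avoiding E S x y"
proof -
  define R where "R = {v \<in> nodes n - S. path_avoiding E S x v}"
  define D where "D = nodes n - S - R"
  have "1 \<le> x" "y \<le> n" using x_in y_in by (auto simp: nodes_def)
  have "2 * \<delta> \<le> \<gamma>" "\<delta> < 1/2" using \<delta>_bound by auto
  interpret separated_windows n R D \<delta>
    using separated_windows_reachable[OF edges expander _ \<open>\<delta> < 1/2\<close>] xy \<open>1 \<le> x\<close> \<open>y \<le> n\<close>
    unfolding R_def D_def by simp
  have "R \<subseteq> nodes n - S" unfolding R_def by blast
  note card_split = card_greaterThanAtMost_diff_split[OF this, folded D_def]
  have "x \<in> R"
    unfolding R_def using good_notin[OF x_good \<gamma>_pos x_in] x_in path_avoiding_refl by blast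
  moreover have "2 * \<delta> * real (z - x) \<le> card (R \<inter> {x<..z}) + card (D \<inter> {x<..z})"
    if "x \<le> z" "z \<le> n" for z
    using good_card_after[OF x_good that] card_split[OF that(2)] \<open>2 * \<delta> \<le> \<gamma>\<close>
      mult_right_mono[of "2 * \<delta>" \<gamma> "real (z - x)"] by simp
  moreover have "2 * \<delta> * t \<le> card (R \<inter> {y-t<..y}) + card (D \<inter> {y-t<..y})" if "t \<le> y" for t
    using good_card_before[OF y_good that \<open>y \<le> n\<close>] card_split[OF \<open>y \<le> n\<close>] \<open>2 * \<delta> \<le> \<gamma>\<close>
      mult_right_mono[of "2 * \<delta>" \<gamma> "real t"] by simp
  ultimately have "y \<in> R" using dense_point_in_R \<open>1 \<le> x\<close> xy \<open>y \<le> n\<close> by blast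
  then show ?thesis unfolding R_def by blast
qed

end
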